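(* Let $\mathcal S=(\mathcal P,\mathcal L)$ be a linear space with $v$ points and constant line size $k$, $2<k<v$, let $G\le\mathrm{Aut}(\mathcal S)$ be transitive on lines, and let $\mathfrak C$ be a non-trivial $G$-invariant partition of $\mathcal P$ with $d$ classes of size $c$. Then (i) $|\mathrm{spec}\,\mathcal S|\ge 2$; (ii) $c\notin\mathrm{spec}\,\mathcal S$; (iii) if $\mathrm{spec}\,\mathcal S=\{1,h\}$ with $h\ge 2$, then for each class $C\in\mathfrak C$ the induced linear space $\mathcal S|_C$ has constant line size $h$.
   Context: A linear space $\mathcal S=(\mathcal P,\mathcal L)$: a finite set $\mathcal P$ of points and a set $\mathcal L$ of subsets (lines) such that any two distinct points lie on exactly one line and each line has at least two points. Line-transitivity of $G$ implies point-transitivity. A partition is non-trivial if it has more than one class and its classes have more than one element; $G$-invariant means $G$ permutes the classes. For a line $\lambda$ and $i\ge0$, let $d_i$ be the number of classes $C\in\mathfrak C$ with $|C\cap\lambda|=i$ (independent of $\lambda$ by line-transitivity); $\mathrm{spec}\,\mathcal S=\{i>0: d_i\ne0\}$. For $F\subseteq\mathcal P$ with $|F|\ge2$, the induced linear space is $\mathcal S|_F=(F,\{\lambda\cap F:\lambda\in\mathcal L,\ |\lambda\cap F|\ge2\})$. *)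

theory Defs
  imports Main "HOL-Library.Disjoint_Sets"
begin

definition linear_space :: "'a set \<Rightarrow> 'a set set \<Rightarrow> bool" where
  "linear_space P L \<longleftrightarrow> finite P \<and>
     (\<forall>l\<in>L. l \<subseteq> P \<and> card l \<ge> 2) \<and>
     (\<forall>x\<in>P. \<forall>y\<in>P. x \<noteq> y \<longrightarrow> (\<exists>!l. l \<in> L \<and> x \<in> l \<and> y \<in> l))"

definition automorphism :: "'a set \<Rightarrow> 'a set set \<Rightarrow> ('a \<Rightarrow> 'a) \<Rightarrow> bool" where
  "automorphism P L g \<longleftrightarrow> bij_betw g P P \<and> (\<forall>x. x \<notin> P \<longrightarrow> g x = x) \<and>
     (\<lambda>l. g ` l) ` L = L"

definition aut_subgroup :: "'a set \<Rightarrow> 'a set set \<Rightarrow> ('a \<Rightarrow> 'a) set \<Rightarrow> bool" where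
  "aut_subgroup P L G \<longleftrightarrow> (\<forall>g\<in>G. automorphism P L g) \<and> id \<in> G \<and>
     (\<forall>g\<in>G. \<forall>h\<in>G. g \<circ> h \<in> G) \<and> (\<forall>g\<in>G. inv g \<in> G)"

definition line_transitive :: "'a set set \<Rightarrow> ('a \<Rightarrow> 'a) set \<Rightarrow> bool" where
  "line_transitive L G \<longleftrightarrow> (\<forall>l1\<in>L. \<forall>l2\<in>L. \<exists>g\<in>G. g ` l1 = l2)"

definition G_invariant :: "('a \<Rightarrow> 'a) set \<Rightarrow> 'a set set \<Rightarrow> bool" where
  "G_invariant G \<C> \<longleftrightarrow> (\<forall>g\<in>G. \<forall>C\<in>\<C>. g ` C \<in> \<C>)"

definition nontrivial_partition :: "'a set \<Rightarrow> 'a set set \<Rightarrow> bool" where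
  "nontrivial_partition P \<C> \<longleftrightarrow> partition_on P \<C> \<and> card \<C> > 1 \<and> (\<forall>C\<in>\<C>. card C > 1)"

definition dcount :: "'a set set \<Rightarrow> 'a set \<Rightarrow> nat \<Rightarrow> nat" where
  "dcount \<C> l i = card {C\<in>\<C>. card (C \<inter> l) = i}"

definition spec :: "'a set set \<Rightarrow> 'a set set \<Rightarrow> nat set" where
  "spec L \<C> = {i. i > 0 \<and> (\<exists>l\<in>L. dcount \<C> l i \<noteq> 0)}"

definition induced_lines :: "'a set set \<Rightarrow> 'a set \<Rightarrow> 'a set set" where
  "induced_lines L F = {l \<inter> F | l. l \<in> L \<and> card (l \<inter> F) \<ge> 2}"

end

theory Submission
  imports Defs
begin

(* Count the points of a set S from a point x of S: the lines through x partition the other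
   points, so |S| - 1 is the sum of |l \<inter> S| - 1 over the lines l through x.  For S = P this gives
   v - 1 = r(k - 1), with a replication number r that is constant and at least k (join a point
   off a line to the k points of that line).
   (i) If every line met every class in 0 or i points, then for S a class c - 1 = r(i - 1);
   together with v = dc these equations contradict 2 \<le> i < k \<le> r.
   (ii) If some line contained a class, then by line-transitivity every line would, and distinct
   lines contain distinct classes, so b \<le> d; but bk = vr = dcr then forces cr \<le> k, which is
   impossible for c \<ge> 2 and r \<ge> k.
   (iii) holds because the spectrum records every nonzero intersection size of a class and a
   line, and an induced line has at least two points. *)

abbreviation lines_through :: "'a set set \<Rightarrow> 'a \<Rightarrow> 'a set set" where
  "lines_through L x \<equiv> {l \<in> L. x \<in> l}"

lemma obtain_distinct_of_card_gt_1:
  assumes "1 < card A"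
  obtains x y where "x \<in> A" "y \<in> A" "x \<noteq> y"
  using assms card_le_Suc0_iff_eq[of A] card.infinite by force

lemma linear_space_line_subset: "linear_space P L \<Longrightarrow> l \<in> L \<Longrightarrow> l \<subseteq> P"
  by (simp add: linear_space_def)

lemma linear_space_finite_line: "linear_space P L \<Longrightarrow> l \<in> L \<Longrightarrow> finite l"
  by (meson finite_subset linear_space_def)

lemma linear_space_finite_lines:
  assumes "linear_space P L"
  shows "finite L"
proof -
  have "L \<subseteq> Pow P" using assms by (auto simp: linear_space_def)
  then show ?thesis using assms by (auto simp: linear_space_def intro: finite_subset)
qed

lemma linear_space_line_exists:
  assumes "linear_space P L" "x \<in> P" "y \<in> P" "x \<noteq> y"
  obtains l where "l \<in> L" "x \<in> l" "y \<in> l"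
  using assms unfolding linear_space_def by blast

lemma linear_space_line_unique:
  assumes ls: "linear_space P L" and "l \<in> L" "m \<in> L"
    and "x \<in> l" "y \<in> l" "x \<in> m" "y \<in> m" "x \<noteq> y"
  shows "l = m"
proof -
  have "x \<in> P" "y \<in> P" using assms linear_space_line_subset[OF ls] by blast+
  then show ?thesis using assms unfolding linear_space_def by blast
qed

lemma card_eq_sum_lines_through:
  assumes ls: "linear_space P L" and "S \<subseteq> P" and x: "x \<in> S"
  shows "card S - 1 = (\<Sum>l\<in>lines_through L x. card (l \<inter> S) - 1)"
proof -
  have fin: "finite S" using assms by (meson finite_subset linear_space_def)
  have "S - {x} = (\<Union>l\<in>lines_through L x. l \<inter> S - {x})"
  proof
    show "S - {x} \<subseteq> (\<Union>l\<in>lines_through L x. l \<inter> S - {x})"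
    proof
      fix y assume "y \<in> S - {x}"
      moreover obtain l where "l \<in> L" "x \<in> l" "y \<in> l"
        using linear_space_line_exists[OF ls, of x y] \<open>S \<subseteq> P\<close> x \<open>y \<in> S - {x}\<close> by blast
      ultimately show "y \<in> (\<Union>l\<in>lines_through L x. l \<inter> S - {x})" by blast
    qed
  qed blast
  also have "card \<dots> = (\<Sum>l\<in>lines_through L x. card (l \<inter> S - {x}))"
    using linear_space_finite_lines[OF ls] fin linear_space_line_unique[OF ls]
    by (intro card_UN_disjoint) auto
  finally show ?thesis using x fin by (simp add: card_Diff_singleton)
qed

lemma card_points_eq_replication:
  assumes ls: "linear_space P L" and k: "\<forall>l\<in>L. card l = k" and "x \<in> P"
  shows "card P - 1 = card (lines_through L x) * (k - 1)"
  using card_eq_sum_lines_through[OF ls order.refl \<open>x \<in> P\<close>] k linear_space_line_subset[OF ls]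
  by (simp add: Int_absorb2)

lemma card_line_le_replication:
  assumes ls: "linear_space P L" and l: "l \<in> L" and y: "y \<in> P" "y \<notin> l"
  shows "card l \<le> card (lines_through L y)"
proof -
  have "\<forall>z\<in>l. \<exists>m. m \<in> L \<and> y \<in> m \<and> z \<in> m"
    using linear_space_line_exists[OF ls] linear_space_line_subset[OF ls l] y by blast
  then obtain f where f: "\<And>z. z \<in> l \<Longrightarrow> f z \<in> L \<and> y \<in> f z \<and> z \<in> f z" by metis
  have "inj_on f l"
  proof
    fix a b assume "a \<in> l" "b \<in> l" "f a = f b"
    then show "a = b" using f y linear_space_line_unique[OF ls l, of "f a" a b] by auto
  qed
  moreover have "f ` l \<subseteq> lines_through L y" using f by auto
  ultimately show ?thesis using linear_space_finite_lines[OF ls] by (simp add: card_inj_on_le)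
qed

lemma uniform_replication:
  assumes ls: "linear_space P L" and k: "\<forall>l\<in>L. card l = k"
    and "2 \<le> k" and "k < card P"
  obtains r where "\<And>x. x \<in> P \<Longrightarrow> card (lines_through L x) = r"
    and "card P - 1 = r * (k - 1)" and "k \<le> r"
proof -
  obtain x y where "x \<in> P" "y \<in> P" "x \<noteq> y"
    using \<open>2 \<le> k\<close> \<open>k < card P\<close> obtain_distinct_of_card_gt_1[of P] by auto
  then obtain l where l: "l \<in> L" using linear_space_line_exists[OF ls] by metis
  have "\<not> P \<subseteq> l"
    using k l \<open>k < card P\<close> linear_space_finite_line[OF ls l] by (metis card_mono not_le)
  then obtain z where z: "z \<in> P" "z \<notin> l" by blast
  define r where "r = card (lines_through L z)"
  have "card (lines_through L x) = r" if "x \<in> P" for x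
  proof -
    have "card (lines_through L x) * (k - 1) = r * (k - 1)"
      using card_points_eq_replication[OF ls k] that z unfolding r_def by metis
    then show ?thesis using \<open>2 \<le> k\<close> by simp
  qed
  moreover have "card P - 1 = r * (k - 1)" using card_points_eq_replication[OF ls k z(1)] r_def by simp
  moreover have "k \<le> r" using card_line_le_replication[OF ls l z] k l r_def by simp
  ultimately show thesis using that by blast
qed

lemma sum_card_lines_eq_sum_replication:
  assumes ls: "linear_space P L"
  shows "(\<Sum>l\<in>L. card l) = (\<Sum>x\<in>P. card (lines_through L x))"
proof -
  have fin: "finite P" "finite L" using ls linear_space_finite_lines by (auto simp: linear_space_def)
  have "(\<Sum>l\<in>L. card l) = (\<Sum>l\<in>L. \<Sum>x\<in>P. if x \<in> l then 1 else 0)"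
    using fin linear_space_line_subset[OF ls] by (intro sum.cong) (auto simp: sum.If_cases Int_absorb1)
  also have "\<dots> = (\<Sum>x\<in>P. \<Sum>l\<in>L. if x \<in> l then 1 else 0)" by (rule sum.swap)
  also have "\<dots> = (\<Sum>x\<in>P. card (lines_through L x))"
    using fin by (simp add: sum.If_cases Int_def)
  finally show ?thesis .
qed

lemma spec_eq:
  assumes "finite \<C>"
  shows "spec L \<C> = {card (C \<inter> l) | C l. C \<in> \<C> \<and> l \<in> L \<and> 0 < card (C \<inter> l)}"
proof -
  have nonzero: "0 < dcount \<C> l i \<longleftrightarrow> (\<exists>C\<in>\<C>. card (C \<inter> l) = i)" for l i
    using assms by (auto simp: dcount_def card_gt_0_iff)
  show ?thesis unfolding spec_def by (auto simp: nonzero)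
qed

lemma finite_spec:
  assumes "finite \<C>" "finite L"
  shows "finite (spec L \<C>)"
proof (rule finite_subset)
  show "spec L \<C> \<subseteq> (\<lambda>(C, l). card (C \<inter> l)) ` (\<C> \<times> L)"
    unfolding spec_eq[OF \<open>finite \<C>\<close>] by auto
qed (use assms in simp)

(* Eliminating r gives a(c - 1) = b(v - 1) = b(dc - 1), i.e. c(a - bd) = a - b > 0;
   hence c \<le> a - b < r, whereas c = 1 + rb > r. *)
lemma uniform_class_counts_impossible:
  fixes v c d r a b :: nat
  assumes v: "v = 1 + r * a" and c: "c = 1 + r * b" and "v = d * c"
    and "a < r" and "0 < b" and "b < a"
  shows False
proof -
  have "int c * (int a - int b * int d) = int a - int b"
  proof -
    have "int a * (int c - 1) = int b * (int v - 1)" using v c by simp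
    then show ?thesis using \<open>v = d * c\<close> by (simp add: algebra_simps)
  qed
  moreover have "int a - int b > 0" using \<open>b < a\<close> by simp
  moreover have "int c > 0" using c by (simp add: add_pos_nonneg)
  ultimately have "int a - int b * int d \<ge> 1"
    by (metis int_one_le_iff_zero_less zero_less_mult_pos)
  then have "int c \<le> int a - int b"
    using \<open>int c * _ = _\<close> \<open>int c > 0\<close>
    by (metis mult.right_neutral mult_left_mono order_less_imp_le)
  moreover have "r \<le> r * b" using \<open>0 < b\<close> by simp
  ultimately show False using c \<open>a < r\<close> by linarith
qed

lemma partition_on_finite_class:
  assumes "finite P" and "partition_on P \<C>" and "C \<in> \<C>"
  shows "finite C"
  using assms partition_onD1 by (metis Union_upper finite_subset)

lemma uniform_intersection_size_bounds:
  assumes ls: "linear_space P L" and k: "\<forall>l\<in>L. card l = k"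
    and part: "nontrivial_partition P \<C>"
    and uniform: "\<And>C l. C \<in> \<C> \<Longrightarrow> l \<in> L \<Longrightarrow> C \<inter> l \<noteq> {} \<Longrightarrow> card (C \<inter> l) = i"
  shows "2 \<le> i" and "i < k"
proof -
  have "partition_on P \<C>" and "1 < card \<C>" and big: "\<forall>C\<in>\<C>. 1 < card C"
    using part by (auto simp: nontrivial_partition_def)
  obtain C D where C: "C \<in> \<C>" and D: "D \<in> \<C>" "D \<noteq> C"
    using obtain_distinct_of_card_gt_1[OF \<open>1 < card \<C>\<close>] by metis
  have sub: "E \<subseteq> P" if "E \<in> \<C>" for E
    using that partition_onD1[OF \<open>partition_on P \<C>\<close>] by blast
  obtain x y where xy: "x \<in> C" "y \<in> C" "x \<noteq> y"
    using obtain_distinct_of_card_gt_1 big C by metis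
  then obtain l0 where l0: "l0 \<in> L" "x \<in> l0" "y \<in> l0"
    using linear_space_line_exists[OF ls] sub[OF C] by (metis subsetD)
  have "card {x, y} \<le> card (C \<inter> l0)"
    using xy l0 linear_space_finite_line[OF ls l0(1)] by (intro card_mono) auto
  moreover have "card (C \<inter> l0) = i" using uniform[OF C l0(1)] xy l0 by blast
  ultimately show "2 \<le> i" using xy by simp
  obtain z where z: "z \<in> D" using big D by fastforce
  have "z \<notin> C" using z D C \<open>partition_on P \<C>\<close> by (metis disjointD partition_onD2 IntI empty_iff)
  obtain l1 where l1: "l1 \<in> L" "x \<in> l1" "z \<in> l1"
    using linear_space_line_exists[OF ls, of x z] xy z \<open>z \<notin> C\<close> sub C D by blast
  have "card (C \<inter> l1) < card l1"
    using l1 \<open>z \<notin> C\<close> linear_space_finite_line[OF ls l1(1)] by (intro psubset_card_mono) auto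
  then show "i < k" using uniform[OF C l1(1)] k l1 xy by auto
qed

lemma lines_meet_classes_nonuniformly:
  assumes ls: "linear_space P L" and k: "\<forall>l\<in>L. card l = k" and "2 \<le> k" and "k < card P"
    and part: "nontrivial_partition P \<C>" and c: "\<forall>C\<in>\<C>. card C = c"
    and uniform: "\<And>C l. C \<in> \<C> \<Longrightarrow> l \<in> L \<Longrightarrow> C \<inter> l \<noteq> {} \<Longrightarrow> card (C \<inter> l) = i"
  shows False
proof -
  have "partition_on P \<C>" and "1 < card \<C>" and big: "\<forall>C\<in>\<C>. 1 < card C"
    using part by (auto simp: nontrivial_partition_def)
  have fin: "finite C" if "C \<in> \<C>" for C
    using partition_on_finite_class[OF _ \<open>partition_on P \<C>\<close> that] ls by (simp add: linear_space_def)
  have "2 \<le> i" and "i < k" using uniform_intersection_size_bounds[OF ls k part uniform] by blast+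
  obtain r where r: "\<And>x. x \<in> P \<Longrightarrow> card (lines_through L x) = r"
    and v: "card P - 1 = r * (k - 1)" and "k \<le> r"
    using uniform_replication[OF ls k \<open>2 \<le> k\<close> \<open>k < card P\<close>] by blast
  obtain C x where C: "C \<in> \<C>" and x: "x \<in> C"
    using \<open>1 < card \<C>\<close> big by (metis card.empty ex_in_conv not_less_zero)
  have "C \<subseteq> P" using C partition_onD1[OF \<open>partition_on P \<C>\<close>] by blast
  have "card C - 1 = (\<Sum>l\<in>lines_through L x. card (l \<inter> C) - 1)"
    using card_eq_sum_lines_through[OF ls \<open>C \<subseteq> P\<close> x] .
  also have "\<dots> = (\<Sum>l\<in>lines_through L x. i - 1)"
    using uniform[OF C] x by (intro sum.cong) (auto simp: Int_commute)
  also have "\<dots> = r * (i - 1)" using r x \<open>C \<subseteq> P\<close> by auto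
  finally have "c = 1 + r * (i - 1)" using c C big by fastforce
  moreover have "card P = 1 + r * (k - 1)" using v \<open>k < card P\<close> by linarith
  moreover have "card P = card \<C> * c"
    using product_partition[OF \<open>partition_on P \<C>\<close> fin] c by simp
  ultimately show False using \<open>k \<le> r\<close> \<open>2 \<le> i\<close> \<open>i < k\<close>
    by (intro uniform_class_counts_impossible[of "card P" r "k - 1" c "i - 1" "card \<C>"]) auto
qed

lemma two_le_card_spec:
  assumes ls: "linear_space P L" and k: "\<forall>l\<in>L. card l = k" and "2 \<le> k" and "k < card P"
    and part: "nontrivial_partition P \<C>" and c: "\<forall>C\<in>\<C>. card C = c"
  shows "2 \<le> card (spec L \<C>)"
proof (rule ccontr)
  have "finite \<C>"
    using part ls finite_elements by (auto simp: nontrivial_partition_def linear_space_def)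
  assume "\<not> 2 \<le> card (spec L \<C>)"
  moreover have "finite (spec L \<C>)"
    using finite_spec \<open>finite \<C>\<close> linear_space_finite_lines[OF ls] by blast
  ultimately have "\<forall>i\<in>spec L \<C>. \<forall>j\<in>spec L \<C>. i = j" using card_le_Suc0_iff_eq by fastforce
  then obtain i where "spec L \<C> \<subseteq> {i}" by blast
  have "card (C \<inter> l) = i" if "C \<in> \<C>" "l \<in> L" "C \<inter> l \<noteq> {}" for C l
  proof -
    have "0 < card (C \<inter> l)"
      using that linear_space_finite_line[OF ls] by (simp add: card_gt_0_iff)
    then show ?thesis
      using that spec_eq[OF \<open>finite \<C>\<close>, of L] \<open>spec L \<C> \<subseteq> {i}\<close> by blast
  qed
  then show False using lines_meet_classes_nonuniformly[OF assms] by blast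
qed

lemma line_transitive_every_line_contains_class:
  assumes "line_transitive L G" and "G_invariant G \<C>"
    and "l \<in> L" and "C \<in> \<C>" and "C \<subseteq> l" and "m \<in> L"
  shows "\<exists>D\<in>\<C>. D \<subseteq> m"
proof -
  obtain g where "g \<in> G" "g ` l = m"
    using assms(1,3,6) unfolding line_transitive_def by blast
  then have "g ` C \<in> \<C>" and "g ` C \<subseteq> m"
    using assms(2,4,5) unfolding G_invariant_def by auto
  then show ?thesis by blast
qed

lemma card_lines_le_card_classes:
  assumes ls: "linear_space P L" and "finite \<C>" and big: "\<forall>C\<in>\<C>. 1 < card C"
    and contains: "\<forall>l\<in>L. \<exists>C\<in>\<C>. C \<subseteq> l"
  shows "card L \<le> card \<C>"
proof -
  obtain f where f: "\<And>l. l \<in> L \<Longrightarrow> f l \<in> \<C> \<and> f l \<subseteq> l" using contains by metis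
  have "inj_on f L"
  proof
    fix l m assume "l \<in> L" "m \<in> L" "f l = f m"
    moreover obtain x y where "x \<in> f l" "y \<in> f l" "x \<noteq> y"
      using obtain_distinct_of_card_gt_1 big f \<open>l \<in> L\<close> by metis
    ultimately show "l = m" using f linear_space_line_unique[OF ls] by (metis subsetD)
  qed
  then show ?thesis using f \<open>finite \<C>\<close> by (intro card_inj_on_le) auto
qed

lemma class_size_notin_spec:
  assumes ls: "linear_space P L" and k: "\<forall>l\<in>L. card l = k" and "2 \<le> k" and "k < card P"
    and "line_transitive L G" and "G_invariant G \<C>"
    and part: "nontrivial_partition P \<C>" and c: "\<forall>C\<in>\<C>. card C = c"
  shows "c \<notin> spec L \<C>"
proof
  assume "c \<in> spec L \<C>"
  have "partition_on P \<C>" and "1 < card \<C>" and big: "\<forall>C\<in>\<C>. 1 < card C"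
    using part by (auto simp: nontrivial_partition_def)
  have "finite P" using ls by (simp add: linear_space_def)
  then have "finite \<C>" using \<open>partition_on P \<C>\<close> finite_elements by blast
  have fin: "finite C" if "C \<in> \<C>" for C
    using partition_on_finite_class[OF \<open>finite P\<close> \<open>partition_on P \<C>\<close> that] .
  obtain C l where C: "C \<in> \<C>" and "l \<in> L" and "card (C \<inter> l) = c"
    using \<open>c \<in> spec L \<C>\<close> by (auto simp: spec_eq[OF \<open>finite \<C>\<close>])
  then have "C \<inter> l = C" using card_subset_eq[OF fin[OF C] Int_lower1, of l] c by simp
  then have "\<forall>m\<in>L. \<exists>D\<in>\<C>. D \<subseteq> m"
    using line_transitive_every_line_contains_class[OF assms(5,6) \<open>l \<in> L\<close> C] by blast
  then have "card L \<le> card \<C>" using card_lines_le_card_classes[OF ls \<open>finite \<C>\<close> big] by blast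
  obtain r where r: "\<And>x. x \<in> P \<Longrightarrow> card (lines_through L x) = r" and "k \<le> r"
    using uniform_replication[OF ls k \<open>2 \<le> k\<close> \<open>k < card P\<close>] by blast
  have "card \<C> * c * r = card P * r"
    using product_partition[OF \<open>partition_on P \<C>\<close> fin] c by simp
  also have "\<dots> = card L * k" using sum_card_lines_eq_sum_replication[OF ls] k r by simp
  also have "\<dots> \<le> card \<C> * k" using \<open>card L \<le> card \<C>\<close> by simp
  finally have "c * r \<le> k" using \<open>1 < card \<C>\<close> by (simp add: mult.assoc)
  moreover have "2 \<le> c" using big c C by fastforce
  then have "2 * k \<le> c * r" using \<open>k \<le> r\<close> by (rule mult_le_mono)
  ultimately show False using \<open>2 \<le> k\<close> by simp
qed

lemma card_induced_line:
  assumes "finite \<C>" and "C \<in> \<C>" and "m \<in> induced_lines L C"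
  shows "card m \<in> spec L \<C>" and "2 \<le> card m"
proof -
  obtain l where "l \<in> L" "m = C \<inter> l" "2 \<le> card m"
    using assms(3) unfolding induced_lines_def by (auto simp: Int_commute)
  moreover have "0 < card m" using \<open>2 \<le> card m\<close> by simp
  ultimately show "card m \<in> spec L \<C>" and "2 \<le> card m"
    unfolding spec_eq[OF assms(1)] using assms(2) by blast+
qed

theorem theorem4p2:
  fixes P :: "'a set" and L :: "'a set set" and G :: "('a \<Rightarrow> 'a) set"
    and \<C> :: "'a set set" and v k c d :: nat
  assumes "linear_space P L"
    and "card P = v"
    and "\<forall>l\<in>L. card l = k"
    and "2 < k" and "k < v"
    and "aut_subgroup P L G"
    and "line_transitive L G"
    and "nontrivial_partition P \<C>"
    and "G_invariant G \<C>"
    and "card \<C> = d"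
    and "\<forall>C\<in>\<C>. card C = c"
  shows "card (spec L \<C>) \<ge> 2 \<and> c \<notin> spec L \<C> \<and>
         (\<forall>h. h \<ge> 2 \<and> spec L \<C> = {1, h} \<longrightarrow>
            (\<forall>C\<in>\<C>. \<forall>m\<in>induced_lines L C. card m = h))"
proof (intro conjI allI impI ballI)
  have "2 \<le> k" and "k < card P" using assms(2,4,5) by simp_all
  show "card (spec L \<C>) \<ge> 2"
    using two_le_card_spec[OF assms(1,3) \<open>2 \<le> k\<close> \<open>k < card P\<close> assms(8,11)] .
  show "c \<notin> spec L \<C>"
    using class_size_notin_spec[OF assms(1,3) \<open>2 \<le> k\<close> \<open>k < card P\<close> assms(7,9,8,11)] .
  fix h C m
  assume "2 \<le> h \<and> spec L \<C> = {1, h}" and "C \<in> \<C>" and "m \<in> induced_lines L C"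
  moreover have "finite \<C>"
    using assms(1,8) finite_elements by (auto simp: linear_space_def nontrivial_partition_def)
  ultimately show "card m = h" using card_induced_line by fastforce
qed

end
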